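(* Let $N=\{1,\dots,n\}$ and let $F:2^N\to\mathbb{R}$ be quasi-submodular. Suppose the maximization procedure (described in the context) outputs the lattice $[X_+,Y_+]$. Then every global maximizer of $F$ lies in $[X_+,Y_+]$, i.e., for every $X_*\in\arg\max_{X\subseteq N}F(X)$ we have $X_+\subseteq X_*\subseteq Y_+$.
   Context: For $A\subseteq N$ and $i\in N$, write $A+i=A\cup\{i\}$, $A-i=A\setminus\{i\}$, and $F(i\mid A)=F(A+i)-F(A)$. A set function $F:2^N\to\mathbb{R}$ is quasi-submodular if for all $X,Y\subseteq N$ both hold: $F(X\cap Y)\ge F(X)\Rightarrow F(Y)\ge F(X\cup Y)$, and $F(X\cap Y)>F(X)\Rightarrow F(Y)>F(X\cup Y)$. For sets $A,B$, $[A,B]=\{U: A\subseteq U\subseteq B\}$. Maximization procedure: set $X_0=\emptyset$, $Y_0=N$; for $t=0,1,2,\dots$: let $U_t=\{u\in Y_t\setminus X_t: F(u\mid Y_t-u)>0\}$ and $X_{t+1}=X_t\cup U_t$; let $D_t=\{d\in Y_t\setminus X_t: F(d\mid X_t)<0\}$ and $Y_{t+1}=Y_t\setminus D_t$; if $X_{t+1}=X_t$ and $Y_{t+1}=Y_t$, stop and output the lattice $[X_t,Y_t]$; otherwise continue with $t+1$. *)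

theory Defs
  imports Complex_Main
begin

definition marg :: "('a set \<Rightarrow> real) \<Rightarrow> 'a \<Rightarrow> 'a set \<Rightarrow> real" where
  "marg F i A = F (insert i A) - F A"

definition quasi_submodular :: "'a set \<Rightarrow> ('a set \<Rightarrow> real) \<Rightarrow> bool" where
  "quasi_submodular N F \<longleftrightarrow>
     (\<forall>X Y. X \<subseteq> N \<longrightarrow> Y \<subseteq> N \<longrightarrow>
        (F (X \<inter> Y) \<ge> F X \<longrightarrow> F Y \<ge> F (X \<union> Y)) \<and>
        (F (X \<inter> Y) > F X \<longrightarrow> F Y > F (X \<union> Y)))"

definition max_step :: "('a set \<Rightarrow> real) \<Rightarrow> 'a set \<times> 'a set \<Rightarrow> 'a set \<times> 'a set" where
  "max_step F XY = (let X = fst XY; Y = snd XY;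
       U = {u \<in> Y - X. marg F u (Y - {u}) > 0};
       D = {d \<in> Y - X. marg F d X < 0}
     in (X \<union> U, Y - D))"

definition max_iter :: "'a set \<Rightarrow> ('a set \<Rightarrow> real) \<Rightarrow> nat \<Rightarrow> 'a set \<times> 'a set" where
  "max_iter N F t = (max_step F ^^ t) ({}, N)"

definition max_outputs :: "'a set \<Rightarrow> ('a set \<Rightarrow> real) \<Rightarrow> 'a set \<Rightarrow> 'a set \<Rightarrow> bool" where
  "max_outputs N F Xp Yp \<longleftrightarrow>
     (\<exists>t. max_iter N F t = (Xp, Yp) \<and> max_step F (Xp, Yp) = (Xp, Yp) \<and>
          (\<forall>s<t. max_step F (max_iter N F s) \<noteq> max_iter N F s))"

end

theory Submission
  imports Defs
begin

text \<open>Every global maximizer \<open>X\<^sub>*\<close> stays in the current lattice \<open>[X\<^sub>t, Y\<^sub>t]\<close>.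
  If an element \<open>u\<close> added to \<open>X\<^sub>t\<close> were missing from \<open>X\<^sub>*\<close>, quasi-submodularity
  applied to \<open>X\<^sub>* + u\<close> and \<open>Y\<^sub>t - u\<close> (whose meet is the maximizer \<open>X\<^sub>*\<close>) would give
  \<open>F(Y\<^sub>t - u) \<ge> F(Y\<^sub>t)\<close>, contradicting \<open>F(u | Y\<^sub>t - u) > 0\<close>. Dually, if an element \<open>d\<close>
  removed from \<open>Y\<^sub>t\<close> belonged to \<open>X\<^sub>*\<close>, the strict part applied to \<open>X\<^sub>t + d\<close> and
  \<open>X\<^sub>* - d\<close> would give \<open>F(X\<^sub>* - d) > F(X\<^sub>*)\<close>.\<close>

lemma quasi_submodularD_le:
  assumes "quasi_submodular N F" "A \<subseteq> N" "B \<subseteq> N" "F (A \<inter> B) \<ge> F A"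
  shows "F B \<ge> F (A \<union> B)"
  using assms unfolding quasi_submodular_def by blast

lemma quasi_submodularD_less:
  assumes "quasi_submodular N F" "A \<subseteq> N" "B \<subseteq> N" "F (A \<inter> B) > F A"
  shows "F B > F (A \<union> B)"
  using assms unfolding quasi_submodular_def by blast

lemma maximizer_contains_positive_top_marg:
  assumes qs: "quasi_submodular N F"
    and max: "\<forall>X. X \<subseteq> N \<longrightarrow> F X \<le> F Xs"
    and "Xs \<subseteq> Y" "Y \<subseteq> N" "u \<in> Y" "marg F u (Y - {u}) > 0"
  shows "u \<in> Xs"
proof (rule ccontr)
  assume "u \<notin> Xs"
  then have meet: "insert u Xs \<inter> (Y - {u}) = Xs"
    and join: "insert u Xs \<union> (Y - {u}) = Y" using assms by auto
  have sub: "insert u Xs \<subseteq> N" "Y - {u} \<subseteq> N" using assms by auto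
  have "F (insert u Xs \<inter> (Y - {u})) \<ge> F (insert u Xs)"
    unfolding meet using max sub by blast
  from quasi_submodularD_le[OF qs sub this] have "F (Y - {u}) \<ge> F Y"
    unfolding join .
  moreover have "insert u (Y - {u}) = Y" using \<open>u \<in> Y\<close> by auto
  ultimately show False using \<open>marg F u (Y - {u}) > 0\<close> unfolding marg_def by simp
qed

lemma maximizer_avoids_negative_bottom_marg:
  assumes qs: "quasi_submodular N F"
    and "Xs \<subseteq> N" and max: "\<forall>X. X \<subseteq> N \<longrightarrow> F X \<le> F Xs"
    and "X \<subseteq> Xs" "d \<notin> X" "marg F d X < 0"
  shows "d \<notin> Xs"
proof
  assume "d \<in> Xs"
  then have meet: "insert d X \<inter> (Xs - {d}) = X"
    and join: "insert d X \<union> (Xs - {d}) = Xs" using assms by auto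
  have sub: "insert d X \<subseteq> N" "Xs - {d} \<subseteq> N" using assms \<open>d \<in> Xs\<close> by auto
  have "F (insert d X \<inter> (Xs - {d})) > F (insert d X)"
    unfolding meet using \<open>marg F d X < 0\<close> unfolding marg_def by simp
  from quasi_submodularD_less[OF qs sub this] have "F (Xs - {d}) > F Xs"
    unfolding join .
  moreover have "F (Xs - {d}) \<le> F Xs" using max sub by blast
  ultimately show False by linarith
qed

lemma max_step_keeps_maximizer:
  assumes qs: "quasi_submodular N F"
    and "Xs \<subseteq> N" and max: "\<forall>X. X \<subseteq> N \<longrightarrow> F X \<le> F Xs"
    and "X \<subseteq> Xs" "Xs \<subseteq> Y" "Y \<subseteq> N"
    and step: "max_step F (X, Y) = (X', Y')"
  shows "X' \<subseteq> Xs \<and> Xs \<subseteq> Y' \<and> Y' \<subseteq> N"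
  using step assms maximizer_contains_positive_top_marg[OF qs max]
    maximizer_avoids_negative_bottom_marg[OF qs \<open>Xs \<subseteq> N\<close> max]
  unfolding max_step_def Let_def by auto

lemma max_iter_keeps_maximizer:
  assumes qs: "quasi_submodular N F"
    and "Xs \<subseteq> N" and max: "\<forall>X. X \<subseteq> N \<longrightarrow> F X \<le> F Xs"
    and "max_iter N F t = (X, Y)"
  shows "X \<subseteq> Xs \<and> Xs \<subseteq> Y \<and> Y \<subseteq> N"
  using assms(4)
proof (induction t arbitrary: X Y)
  case 0
  then show ?case using \<open>Xs \<subseteq> N\<close> by (simp add: max_iter_def)
next
  case (Suc t)
  obtain X0 Y0 where prev: "max_iter N F t = (X0, Y0)" by fastforce
  then have "max_step F (X0, Y0) = (X, Y)"
    using Suc.prems by (simp add: max_iter_def)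
  with Suc.IH[OF prev] show ?case
    using max_step_keeps_maximizer[OF qs \<open>Xs \<subseteq> N\<close> max] by blast
qed

theorem theorem2:
  fixes n :: nat and F :: "nat set \<Rightarrow> real" and Xp Yp Xs :: "nat set"
  assumes "quasi_submodular {1..n} F"
    and "max_outputs {1..n} F Xp Yp"
    and "Xs \<subseteq> {1..n}"
    and "\<forall>X. X \<subseteq> {1..n} \<longrightarrow> F X \<le> F Xs"
  shows "Xp \<subseteq> Xs \<and> Xs \<subseteq> Yp"
proof -
  obtain t where "max_iter {1..n} F t = (Xp, Yp)"
    using assms(2) unfolding max_outputs_def by blast
  with max_iter_keeps_maximizer[OF assms(1,3,4)] show ?thesis by blast
qed

end
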